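(* Let $x_1,\dots,x_H\in\mathbb{R}^d$, $\theta_a^\star\in\mathbb{R}^d$ for $a\in\mathcal{M}=\{1,\dots,N\}$, $\alpha>0$ and $\lambda_a>0$. For $S\subseteq\mathcal{M}$ let $\mu_t(a;S):=\langle\theta_a^\star,x_t\rangle-\alpha\lambda_a\mathbf{1}\{a\notin S\}$ and $$f(S):=\sum_{t=1}^H\Bigl[\max_{a\in\mathcal{M}}\mu_t(a;S)-\max_{a\in\mathcal{M}}\mu_t(a;\emptyset)\Bigr].$$ Then $f$ is monotone non-decreasing and submodular on subsets of $\mathcal{M}$. *)

theory Defs
  imports "HOL-Analysis.Analysis"
begin

definition mu_t :: "(nat \<Rightarrow> real ^ 'd) \<Rightarrow> (nat \<Rightarrow> real ^ 'd) \<Rightarrow> real \<Rightarrow> (nat \<Rightarrow> real)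
    \<Rightarrow> nat \<Rightarrow> nat \<Rightarrow> nat set \<Rightarrow> real" where
  "mu_t x \<theta> \<alpha> lam t a S = \<theta> a \<bullet> x t - \<alpha> * lam a * (if a \<notin> S then 1 else 0)"

definition f_obj :: "nat \<Rightarrow> nat \<Rightarrow> (nat \<Rightarrow> real ^ 'd) \<Rightarrow> (nat \<Rightarrow> real ^ 'd) \<Rightarrow> real
    \<Rightarrow> (nat \<Rightarrow> real) \<Rightarrow> nat set \<Rightarrow> real" where
  "f_obj N H x \<theta> \<alpha> lam S =
     (\<Sum>t=1..H. (MAX a\<in>{1..N}. mu_t x \<theta> \<alpha> lam t a S) - (MAX a\<in>{1..N}. mu_t x \<theta> \<alpha> lam t a {}))"

definition monotone_set_fun :: "'a set \<Rightarrow> ('a set \<Rightarrow> real) \<Rightarrow> bool" where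
  "monotone_set_fun M g \<longleftrightarrow> (\<forall>A B. A \<subseteq> B \<and> B \<subseteq> M \<longrightarrow> g A \<le> g B)"

definition submodular_set_fun :: "'a set \<Rightarrow> ('a set \<Rightarrow> real) \<Rightarrow> bool" where
  "submodular_set_fun M g \<longleftrightarrow>
     (\<forall>A B e. A \<subseteq> B \<and> B \<subseteq> M \<and> e \<in> M - B \<longrightarrow>
        g (insert e A) - g A \<ge> g (insert e B) - g B)"

end

theory Submission
  imports Defs
begin

text \<open>Lifting the penalty of arm \<open>e\<close> replaces its reward by the unpenalised value \<open>v e\<close>,
  which already dominates every penalised reward of \<open>e\<close>; hence each per-round maximum \<open>h\<close>
  satisfies \<open>h (insert e S) = max (h S) (v e)\<close>. The marginal gain \<open>max (h S) (v e) - h S\<close> is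
  then a non-increasing function of \<open>h S\<close>, and \<open>h\<close> itself is monotone, so the gain is
  non-increasing in \<open>S\<close>. Monotonicity and submodularity survive subtracting a constant
  and summing over the rounds.\<close>

lemma monotone_set_fun_diff_const:
  "monotone_set_fun M (\<lambda>S. g S - c) \<longleftrightarrow> monotone_set_fun M g"
  by (simp add: monotone_set_fun_def)

lemma submodular_set_fun_diff_const:
  "submodular_set_fun M (\<lambda>S. g S - c) \<longleftrightarrow> submodular_set_fun M g"
  by (simp add: submodular_set_fun_def)

lemma monotone_set_fun_sum:
  assumes "\<And>i. i \<in> I \<Longrightarrow> monotone_set_fun M (g i)"
  shows "monotone_set_fun M (\<lambda>S. \<Sum>i\<in>I. g i S)"
  using assms unfolding monotone_set_fun_def by (blast intro: sum_mono)

lemma submodular_set_fun_sum: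
  assumes "\<And>i. i \<in> I \<Longrightarrow> submodular_set_fun M (g i)"
  shows "submodular_set_fun M (\<lambda>S. \<Sum>i\<in>I. g i S)"
  unfolding submodular_set_fun_def
proof (intro allI impI)
  fix A B e assume "A \<subseteq> B \<and> B \<subseteq> M \<and> e \<in> M - B"
  then have "g i (insert e B) - g i B \<le> g i (insert e A) - g i A" if "i \<in> I" for i
    using assms[OF that] unfolding submodular_set_fun_def by blast
  then have "(\<Sum>i\<in>I. g i (insert e B) - g i B) \<le> (\<Sum>i\<in>I. g i (insert e A) - g i A)"
    by (rule sum_mono)
  then show "(\<Sum>i\<in>I. g i (insert e A)) - (\<Sum>i\<in>I. g i A)
      \<ge> (\<Sum>i\<in>I. g i (insert e B)) - (\<Sum>i\<in>I. g i B)"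
    by (simp add: sum_subtractf)
qed

lemma insert_max_imp_submodular_set_fun:
  assumes "monotone_set_fun M g"
    and "\<And>e S. e \<in> M \<Longrightarrow> S \<subseteq> M \<Longrightarrow> g (insert e S) = max (g S) (w e)"
  shows "submodular_set_fun M g"
  unfolding submodular_set_fun_def
proof (intro allI impI)
  fix A B e assume AB: "A \<subseteq> B \<and> B \<subseteq> M \<and> e \<in> M - B"
  then have "g A \<le> g B"
    using assms(1) unfolding monotone_set_fun_def by blast
  moreover have "g (insert e A) = max (g A) (w e)" "g (insert e B) = max (g B) (w e)"
    using AB assms(2) by auto
  ultimately show "g (insert e A) - g A \<ge> g (insert e B) - g B"
    by (simp add: max_def)
qed

lemma penalised_max_mono:
  fixes v p :: "'a \<Rightarrow> real"
  assumes "finite A" "A \<noteq> {}" "\<And>a. a \<in> A \<Longrightarrow> p a \<ge> 0" "S \<subseteq> T"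
  shows "(MAX a\<in>A. v a - p a * (if a \<notin> S then 1 else 0))
       \<le> (MAX a\<in>A. v a - p a * (if a \<notin> T then 1 else 0))"
proof -
  have "v a - p a * (if a \<notin> S then 1 else 0) \<le> (MAX a\<in>A. v a - p a * (if a \<notin> T then 1 else 0))"
    if "a \<in> A" for a
  proof -
    have "v a - p a * (if a \<notin> S then 1 else 0) \<le> v a - p a * (if a \<notin> T then 1 else 0)"
      using assms(3)[OF that] assms(4) by auto
    also have "\<dots> \<le> (MAX a\<in>A. v a - p a * (if a \<notin> T then 1 else 0))"
      using assms(1) that by simp
    finally show ?thesis .
  qed
  then show ?thesis
    using assms(1,2) by simp
qed

lemma penalised_max_insert:
  fixes v p :: "'a \<Rightarrow> real"
  assumes "finite A" "\<And>a. a \<in> A \<Longrightarrow> p a \<ge> 0" "e \<in> A"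
  shows "(MAX a\<in>A. v a - p a * (if a \<notin> insert e S then 1 else 0))
       = max (MAX a\<in>A. v a - p a * (if a \<notin> S then 1 else 0)) (v e)"
proof -
  let ?r = "\<lambda>S a. v a - p a * (if a \<notin> S then 1 else 0)"
  have split: "?r T ` A = insert (?r T e) (?r T ` (A - {e}))" for T
    using assms(3) by blast
  have same: "?r (insert e S) ` (A - {e}) = ?r S ` (A - {e})"
    by (rule image_cong) auto
  have penalised_le: "?r S e \<le> v e"
    using assms(2,3) by simp
  show ?thesis
  proof (cases "A - {e} = {}")
    case True
    with assms(3) have "A = {e}" by blast
    with penalised_le show ?thesis by (simp add: max_absorb2)
  next
    case False
    with assms(1) have Max_split: "Max (?r T ` A) = max (?r T e) (Max (?r T ` (A - {e})))" for T
      unfolding split by (simp add: Max_insert)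
    have "Max (?r (insert e S) ` A) = max (v e) (Max (?r S ` (A - {e})))"
      unfolding Max_split same by simp
    also have "\<dots> = max (max (?r S e) (Max (?r S ` (A - {e})))) (v e)"
      using penalised_le by (simp add: max_def)
    also have "\<dots> = max (Max (?r S ` A)) (v e)"
      unfolding Max_split ..
    finally show ?thesis .
  qed
qed

lemma monotone_set_fun_penalised_max:
  fixes v p :: "'a \<Rightarrow> real"
  assumes "finite A" "A \<noteq> {}" "\<And>a. a \<in> A \<Longrightarrow> p a \<ge> 0"
  shows "monotone_set_fun M (\<lambda>S. MAX a\<in>A. v a - p a * (if a \<notin> S then 1 else 0))"
  unfolding monotone_set_fun_def using assms penalised_max_mono[of A p] by blast

lemma submodular_set_fun_penalised_max:
  fixes v p :: "'a \<Rightarrow> real"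
  assumes "finite A" "A \<noteq> {}" "\<And>a. a \<in> A \<Longrightarrow> p a \<ge> 0"
  shows "submodular_set_fun A (\<lambda>S. MAX a\<in>A. v a - p a * (if a \<notin> S then 1 else 0))"
  using monotone_set_fun_penalised_max[OF assms] penalised_max_insert[OF assms(1,3)]
  by (rule insert_max_imp_submodular_set_fun)

theorem lemmaC3:
  fixes N H :: nat and x \<theta> :: "nat \<Rightarrow> real ^ 'd" and \<alpha> :: real and lam :: "nat \<Rightarrow> real"
  assumes "N \<ge> 1"
    and "\<alpha> > 0"
    and "\<forall>a\<in>{1..N}. lam a > 0"
  shows "monotone_set_fun {1..N} (f_obj N H x \<theta> \<alpha> lam)
       \<and> submodular_set_fun {1..N} (f_obj N H x \<theta> \<alpha> lam)"
proof -
  define h where "h t S = (MAX a\<in>{1..N}. \<theta> a \<bullet> x t - \<alpha> * lam a * (if a \<notin> S then 1 else 0))"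
    for t S
  have f_obj_eq: "f_obj N H x \<theta> \<alpha> lam = (\<lambda>S. \<Sum>t=1..H. h t S - h t {})"
    by (simp add: fun_eq_iff f_obj_def h_def mu_t_def)
  have arms: "finite {1..N}" "{1..N} \<noteq> {}" "\<And>a. a \<in> {1..N} \<Longrightarrow> \<alpha> * lam a \<ge> 0"
    using assms by (auto intro: less_imp_le)
  have "monotone_set_fun {1..N} (h t)" for t
    unfolding h_def by (rule monotone_set_fun_penalised_max[OF arms])
  moreover have "submodular_set_fun {1..N} (h t)" for t
    unfolding h_def by (rule submodular_set_fun_penalised_max[OF arms])
  ultimately show ?thesis
    unfolding f_obj_eq
    by (simp add: monotone_set_fun_sum submodular_set_fun_sum
        monotone_set_fun_diff_const submodular_set_fun_diff_const)
qed

end
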